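(* Consider the closed loop defined in the context: the plant $x(k+1)=Ax(k)+Bu(k)+w(k)$; at every planning instant $k=k_pM$ the planning problem $\mathcal{P}(x(k_pM))$ is solved, giving an optimal solution with mode $i^\star$ and first planned state/input $x_p^\star(k_p|k_p),u_p^\star(k_p|k_p)$, from which the reference $x_{\text{ref}}(k_pM+j)=A^jx_p^\star(k_p|k_p)+\sum_{m=0}^{j-1}A^mBu_p^\star(k_p|k_p)$, $j=0,\dots,M$, is generated; at every time $k\in\{k_pM,\dots,k_pM+M-1\}$ the lower-layer problem $\mathcal{L}(x(k),\{x_{\text{ref}}\},i^\star,k)$ is solved and $u(k)=v^\star(k|k)$ is applied. Suppose Assumptions (A1)–(A4) hold. If the planning problem $\mathcal{P}(x(0))$ is feasible, then along the closed loop the planning problems $\mathcal{P}(x(k_pM))$ and the lower-layer problems $\mathcal{L}(x(k),\{x_{\text{ref}}\},i^\star,k)$ remain feasible for all $k_p\ge0$ and all $k\ge0$.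
   Context: System: $x(k+1)=Ax(k)+Bu(k)+w(k)$, $y(k)=Cx(k)$, with $x(k)\in\mathbb{R}^n$, $u(k)\in\mathbb{R}^m$, $y(k)\in\mathbb{R}^p$, unknown disturbance $w(k)\in\mathbb{R}^n$, closed convex constraint sets $\mathbb{X}\subseteq\mathbb{R}^n$, $\mathbb{U}\subseteq\mathbb{R}^m$. Obstacles: for $\ell=1,\dots,H$, $\mathbb{O}_\ell=\{y\in\mathbb{R}^p:E_\ell y<f_\ell\}$ (componentwise), $E_\ell\in\mathbb{R}^{q_\ell\times p}$, each the interior of a compact convex polytope; $\mathbb{O}=\bigcup_\ell\mathbb{O}_\ell$. Notation: $\mathbb{X}\oplus\mathbb{Y}=\{x+y:x\in\mathbb{X},y\in\mathbb{Y}\}$, $\mathbb{X}\ominus\mathbb{Y}=\{x:\{x\}\oplus\mathbb{Y}\subseteq\mathbb{X}\}$, $G\mathbb{S}=\{Gs:s\in\mathbb{S}\}$; $\operatorname{rem}(k,M)$ is the remainder of $k$ divided by $M$; $\|x\|_Q^2=x^\top Qx$. Modes: $N_w$ modes; for each $i$, $\mathbb{X}_i\subseteq\mathbb{X}$, $\mathbb{U}_i\subseteq\mathbb{U}$ closed convex polytopes, $\mathbb{W}_i$ compact convex polytope. (A1): if $x(k)\in\mathbb{X}_i$ and $u(k)\in\mathbb{U}_i$ then $w(k)\in\mathbb{W}_i$. $K\in\mathbb{R}^{m\times n}$ with $A+BK$ Schur stable; $\mathbb{Z}_i$ compact convex polytopes with $(A+BK)\mathbb{Z}_i\oplus\mathbb{W}_i\subseteq\mathbb{Z}_i$;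 $\mathbb{E}_i(0)=\{0\}$, $\mathbb{E}_i(j+1)=(A+BK)\mathbb{E}_i(j)\oplus\mathbb{W}_i$. $M>1$ integer, $A_p=A^M$, $B_p=\sum_{i=0}^{M-1}A^iB$. (A2): $(A,B)$ and $(A_p,B_p)$ controllable. (A3) Inter-sample sets $\mathbb{I}_i\subseteq\mathbb{R}^n\times\mathbb{R}^m$: if $(x_p,u_p)\in\mathbb{I}_i$ then for $\ell=1,\dots,M-1$: $A^\ell x_p+\sum_{m=0}^{\ell-1}A^mBu_p\in\mathbb{X}_i\ominus\mathbb{Z}_i$ and $C(A^\ell x_p+\sum_{m=0}^{\ell-1}A^mBu_p)\notin\mathbb{O}\oplus(-C)\mathbb{Z}_i$. (A4) Terminal sets $\mathbb{X}^f_i$ and maps $\kappa^f_i$: $x_p\in\mathbb{X}^f_i$ implies $A_px_p+B_p\kappa^f_i(x_p)\in\mathbb{X}^f_i$, $x_p\in\mathbb{X}_i\ominus\mathbb{Z}_i$, $\kappa^f_i(x_p)\in\mathbb{U}_i\ominus K\mathbb{Z}_i$, $(x_p,\kappa^f_i(x_p))\in\mathbb{I}_i$, $Cx_p\notin\mathbb{O}\oplus(-C)\mathbb{Z}_i$. Planning problem $\mathcal{P}(\xi)$ at planning index $k_p$, $\xi=x(k_pM)$, horizon $N$, weights $\alpha_x,\alpha_u\ge0$, goal $x_{\text{goal}}$: minimize over $x_p(k_p+j|k_p)$ ($j=0,\dots,N$), $u_p(k_p+j|k_p)$ ($j=0,\dots,N-1$), $i$ the cost $\|x_{\text{goal}}-x_p(k_p+N|k_p)\|_\infty+\sum_{j=0}^{N-1}(\alpha_x\|x_p(k_p+j|k_p)\|_\infty+\alpha_u\|u_p(k_p+j|k_p)\|_\infty)$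 subject to $i\in\{1,\dots,N_w\}$, $\xi-x_p(k_p|k_p)\in\mathbb{Z}_i$, and for all $j\in\{0,\dots,N-1\}$: $x_p(k_p+j+1|k_p)=A_px_p(k_p+j|k_p)+B_pu_p(k_p+j|k_p)$, $x_p(k_p+j|k_p)\in\mathbb{X}_i\ominus\mathbb{Z}_i$, $u_p(k_p+j|k_p)\in\mathbb{U}_i\ominus K\mathbb{Z}_i$, $Cx_p(k_p+j|k_p)\notin\mathbb{O}\oplus(-C)\mathbb{Z}_i$, $(x_p(k_p+j|k_p),u_p(k_p+j|k_p))\in\mathbb{I}_i$; and $x_p(k_p+N|k_p)\in\mathbb{X}^f_i$. Lower-layer problem $\mathcal{L}(x(k),\{x_{\text{ref}}\},i,k)$: with $L_k=M-\operatorname{rem}(k,M)$, minimize over $z(k+j|k)$ ($j=0,\dots,L_k$), $v(k+j|k)$ ($j=0,\dots,L_k-1$) the cost $\sum_{j=k}^{k+L_k-1}(\|x_{\text{ref}}(j)-z(j|k)\|_Q^2+\|v(j|k)\|_R^2)+\|x_{\text{ref}}(k+L_k)-z(k+L_k|k)\|_P^2$ ($Q,P,R$ positive definite) subject to $z(k|k)=x(k)$, $z(k+j+1|k)=Az(k+j|k)+Bv(k+j|k)$, and for the relevant $j$: $z(k+j|k)\in\mathbb{X}_i\ominus\mathbb{E}_i(j)$, $v(k+j|k)\in\mathbb{U}_i\ominus K\mathbb{E}_i(j)$, $C(z(k+j|k)-x_{\text{ref}}(k+j))\in C(\mathbb{Z}_i\ominus\mathbb{E}_i(j))$, and $z(k+L_k|k)-x_{\text{ref}}(k+L_k)\in\mathbb{Z}_i\ominus\mathbb{E}_i(L_k)$.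 Its optimal input sequence is denoted $v^\star(\cdot|k)$. *)

theory Defs
  imports "HOL-Analysis.Analysis"
begin

definition msum :: "('a::ab_group_add) set \<Rightarrow> 'a set \<Rightarrow> 'a set" where
  "msum X Y = {x + y | x y. x \<in> X \<and> y \<in> Y}"

definition pdiff :: "('a::ab_group_add) set \<Rightarrow> 'a set \<Rightarrow> 'a set" where
  "pdiff X Y = {x. msum {x} Y \<subseteq> X}"

definition mimage :: "real^'n^'m \<Rightarrow> (real^'n) set \<Rightarrow> (real^'m) set" where
  "mimage G S = {G *v s | s. s \<in> S}"

fun mpow :: "real^'n^'n \<Rightarrow> nat \<Rightarrow> real^'n^'n" where
  "mpow A 0 = mat 1"
| "mpow A (Suc k) = A ** mpow A k"

definition schur_stable :: "real^'n^'n \<Rightarrow> bool" where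
  "schur_stable A \<longleftrightarrow>
     (\<forall>(lam::complex) (v::complex^'n). v \<noteq> 0 \<and>
        (\<chi> i j. complex_of_real (A $ i $ j)) *v v = lam *s v \<longrightarrow> cmod lam < 1)"

text \<open>Kalman rank condition: rank [B, AB, ..., A^(n-1)B] = n, i.e. the columns span R^n.\<close>
definition controllable :: "real^'n^'n \<Rightarrow> real^'m^'n \<Rightarrow> bool" where
  "controllable A B \<longleftrightarrow>
     span {column j (mpow A i ** B) | i j. i < CARD('n)} = (UNIV :: (real^'n) set)"

definition sqnorm :: "real^'n^'n \<Rightarrow> real^'n \<Rightarrow> real" where
  "sqnorm Q x = x \<bullet> (Q *v x)"

definition pos_def :: "real^'n^'n \<Rightarrow> bool" where
  "pos_def Q \<longleftrightarrow> transpose Q = Q \<and> (\<forall>x. x \<noteq> 0 \<longrightarrow> sqnorm Q x > 0)"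

definition Ap :: "real^'n^'n \<Rightarrow> nat \<Rightarrow> real^'n^'n" where
  "Ap A M = mpow A M"

definition Bp :: "real^'n^'n \<Rightarrow> real^'m^'n \<Rightarrow> nat \<Rightarrow> real^'m^'n" where
  "Bp A B M = (\<Sum>i<M. mpow A i ** B)"

definition pred :: "real^'n^'n \<Rightarrow> real^'m^'n \<Rightarrow> nat \<Rightarrow> real^'n \<Rightarrow> real^'m \<Rightarrow> real^'n" where
  "pred A B l x u = mpow A l *v x + (\<Sum>m<l. mpow A m *v (B *v u))"

fun Eset :: "real^'n^'n \<Rightarrow> (real^'n) set \<Rightarrow> nat \<Rightarrow> (real^'n) set" where
  "Eset Acl W 0 = {0}"
| "Eset Acl W (Suc j) = msum (mimage Acl (Eset Acl W j)) W"

text \<open>Obstacle \<open>l\<close> has \<open>q l\<close> rows; row \<open>r\<close> of \<open>E_l\<close> is \<open>Eo l r\<close>, entry \<open>r\<close> of \<open>f_l\<close> is \<open>fo l r\<close>.\<close>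
definition obst :: "(nat \<Rightarrow> nat) \<Rightarrow> (nat \<Rightarrow> nat \<Rightarrow> real^'p) \<Rightarrow> (nat \<Rightarrow> nat \<Rightarrow> real)
                     \<Rightarrow> nat \<Rightarrow> (real^'p) set" where
  "obst q Eo fo l = {y. \<forall>r < q l. Eo l r \<bullet> y < fo l r}"

definition obstacles :: "nat \<Rightarrow> (nat \<Rightarrow> nat) \<Rightarrow> (nat \<Rightarrow> nat \<Rightarrow> real^'p) \<Rightarrow> (nat \<Rightarrow> nat \<Rightarrow> real)
                     \<Rightarrow> (real^'p) set" where
  "obstacles H q Eo fo = (\<Union>l\<in>{1..H}. obst q Eo fo l)"

definition avoids :: "(real^'p) set \<Rightarrow> real^'n^'p \<Rightarrow> (real^'n) set \<Rightarrow> real^'n \<Rightarrow> bool" where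
  "avoids Obs C Z x \<longleftrightarrow> C *v x \<notin> msum Obs (mimage (- C) Z)"

text \<open>Decision variables relative to \<open>k_p\<close>: \<open>xp j = x_p(k_p+j|k_p)\<close>, \<open>up j = u_p(k_p+j|k_p)\<close>.\<close>
definition plan_feasible ::
  "real^'n^'n \<Rightarrow> real^'m^'n \<Rightarrow> real^'n^'p \<Rightarrow> (real^'p) set \<Rightarrow> nat \<Rightarrow> nat \<Rightarrow> nat
   \<Rightarrow> (nat \<Rightarrow> (real^'n) set) \<Rightarrow> (nat \<Rightarrow> (real^'m) set) \<Rightarrow> (nat \<Rightarrow> (real^'n) set)
   \<Rightarrow> (nat \<Rightarrow> ((real^'n) \<times> (real^'m)) set) \<Rightarrow> (nat \<Rightarrow> (real^'n) set) \<Rightarrow> real^'n^'m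
   \<Rightarrow> real^'n \<Rightarrow> nat \<Rightarrow> (nat \<Rightarrow> real^'n) \<Rightarrow> (nat \<Rightarrow> real^'m) \<Rightarrow> bool" where
  "plan_feasible A B C Obs M N Nw Xs Us Zs Is Xf K \<xi> i xp up \<longleftrightarrow>
     i \<in> {1..Nw} \<and> \<xi> - xp 0 \<in> Zs i \<and>
     (\<forall>j<N. xp (Suc j) = Ap A M *v xp j + Bp A B M *v up j
          \<and> xp j \<in> pdiff (Xs i) (Zs i)
          \<and> up j \<in> pdiff (Us i) (mimage K (Zs i))
          \<and> avoids Obs C (Zs i) (xp j)
          \<and> (xp j, up j) \<in> Is i) \<and>
     xp N \<in> Xf i"

definition plan_cost ::
  "nat \<Rightarrow> real \<Rightarrow> real \<Rightarrow> real^'n \<Rightarrow> (nat \<Rightarrow> real^'n) \<Rightarrow> (nat \<Rightarrow> real^'m) \<Rightarrow> real" where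
  "plan_cost N ax au xg xp up =
     infnorm (xg - xp N) + (\<Sum>j<N. ax * infnorm (xp j) + au * infnorm (up j))"

definition plan_optimal ::
  "real^'n^'n \<Rightarrow> real^'m^'n \<Rightarrow> real^'n^'p \<Rightarrow> (real^'p) set \<Rightarrow> nat \<Rightarrow> nat \<Rightarrow> nat
   \<Rightarrow> (nat \<Rightarrow> (real^'n) set) \<Rightarrow> (nat \<Rightarrow> (real^'m) set) \<Rightarrow> (nat \<Rightarrow> (real^'n) set)
   \<Rightarrow> (nat \<Rightarrow> ((real^'n) \<times> (real^'m)) set) \<Rightarrow> (nat \<Rightarrow> (real^'n) set) \<Rightarrow> real^'n^'m
   \<Rightarrow> real \<Rightarrow> real \<Rightarrow> real^'n
   \<Rightarrow> real^'n \<Rightarrow> nat \<Rightarrow> (nat \<Rightarrow> real^'n) \<Rightarrow> (nat \<Rightarrow> real^'m) \<Rightarrow> bool" where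
  "plan_optimal A B C Obs M N Nw Xs Us Zs Is Xf K ax au xg \<xi> i xp up \<longleftrightarrow>
     plan_feasible A B C Obs M N Nw Xs Us Zs Is Xf K \<xi> i xp up \<and>
     (\<forall>i' xp' up'. plan_feasible A B C Obs M N Nw Xs Us Zs Is Xf K \<xi> i' xp' up' \<longrightarrow>
        plan_cost N ax au xg xp up \<le> plan_cost N ax au xg xp' up')"

text \<open>Decision variables relative to \<open>k\<close>: \<open>z j = z(k+j|k)\<close>, \<open>v j = v(k+j|k)\<close>;
  \<open>xr\<close> is the reference indexed by absolute time.\<close>
definition lower_feasible ::
  "real^'n^'n \<Rightarrow> real^'m^'n \<Rightarrow> real^'n^'p \<Rightarrow> real^'n^'m \<Rightarrow> nat
   \<Rightarrow> (nat \<Rightarrow> (real^'n) set) \<Rightarrow> (nat \<Rightarrow> (real^'m) set) \<Rightarrow> (nat \<Rightarrow> (real^'n) set)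
   \<Rightarrow> (nat \<Rightarrow> (real^'n) set)
   \<Rightarrow> real^'n \<Rightarrow> (nat \<Rightarrow> real^'n) \<Rightarrow> nat \<Rightarrow> nat
   \<Rightarrow> (nat \<Rightarrow> real^'n) \<Rightarrow> (nat \<Rightarrow> real^'m) \<Rightarrow> bool" where
  "lower_feasible A B C K M Xs Us Ws Zs x xr i k z v \<longleftrightarrow>
     (let L = M - k mod M; E = Eset (A + B ** K) (Ws i) in
       z 0 = x \<and>
       (\<forall>j<L. z (Suc j) = A *v z j + B *v v j
           \<and> z j \<in> pdiff (Xs i) (E j)
           \<and> v j \<in> pdiff (Us i) (mimage K (E j))
           \<and> C *v (z j - xr (k + j)) \<in> mimage C (pdiff (Zs i) (E j))) \<and>
       z L - xr (k + L) \<in> pdiff (Zs i) (E L))"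

definition lower_cost ::
  "real^'n^'n \<Rightarrow> real^'m^'m \<Rightarrow> real^'n^'n \<Rightarrow> nat \<Rightarrow> (nat \<Rightarrow> real^'n) \<Rightarrow> nat
   \<Rightarrow> (nat \<Rightarrow> real^'n) \<Rightarrow> (nat \<Rightarrow> real^'m) \<Rightarrow> real" where
  "lower_cost Q R P M xr k z v =
     (let L = M - k mod M in
       (\<Sum>j<L. sqnorm Q (xr (k + j) - z j) + sqnorm R (v j)) + sqnorm P (xr (k + L) - z L))"

definition lower_optimal ::
  "real^'n^'n \<Rightarrow> real^'m^'n \<Rightarrow> real^'n^'p \<Rightarrow> real^'n^'m \<Rightarrow> nat
   \<Rightarrow> (nat \<Rightarrow> (real^'n) set) \<Rightarrow> (nat \<Rightarrow> (real^'m) set) \<Rightarrow> (nat \<Rightarrow> (real^'n) set)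
   \<Rightarrow> (nat \<Rightarrow> (real^'n) set) \<Rightarrow> real^'n^'n \<Rightarrow> real^'m^'m \<Rightarrow> real^'n^'n
   \<Rightarrow> real^'n \<Rightarrow> (nat \<Rightarrow> real^'n) \<Rightarrow> nat \<Rightarrow> nat
   \<Rightarrow> (nat \<Rightarrow> real^'n) \<Rightarrow> (nat \<Rightarrow> real^'m) \<Rightarrow> bool" where
  "lower_optimal A B C K M Xs Us Ws Zs Q R P x xr i k z v \<longleftrightarrow>
     lower_feasible A B C K M Xs Us Ws Zs x xr i k z v \<and>
     (\<forall>z' v'. lower_feasible A B C K M Xs Us Ws Zs x xr i k z' v' \<longrightarrow>
        lower_cost Q R P M xr k z v \<le> lower_cost Q R P M xr k z' v')"

end

theory Submission
  imports Defs
begin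

text \<open>Recursive feasibility is shown by exhibiting feasible candidates. At a planning instant the
  lower layer can follow the first planned step, corrected by the ancillary feedback \<open>K\<close>
  acting on the initial error \<open>x - x\<^sub>p \<in> Z\<close>; invariance of \<open>Z\<close> under
  \<open>A + BK\<close> and \<open>W\<close> keeps the error inside \<open>Z \<ominus> E(j)\<close>, and (A3) covers the
  inter-sample states. Within a planning interval the previous lower-layer solution, shifted by
  one step and corrected by the realised disturbance \<open>w \<in> W\<close> (guaranteed by (A1)), stays
  feasible because \<open>E(j) \<oplus> (A + BK)\<^sup>j w \<subseteq> E(j+1)\<close>. At the end of the interval the
  terminal tube constraint puts the true state within \<open>Z\<close> of the second planned state, so
  the shifted plan, completed by the terminal law of (A4), is feasible again.\<close>

lemma mem_pdiff_iff: "x \<in> pdiff X Y \<longleftrightarrow> (\<forall>y\<in>Y. x + y \<in> X)"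
  unfolding pdiff_def msum_def by auto

lemma mem_mimage_iff: "y \<in> mimage G S \<longleftrightarrow> (\<exists>s\<in>S. y = G *v s)"
  unfolding mimage_def by auto

lemma pdiff_zero [simp]: "pdiff X {0} = X"
  by (simp add: mem_pdiff_iff set_eq_iff)

lemma mimage_zero [simp]: "mimage G {0} = {0}"
  by (auto simp: mem_mimage_iff)

lemma pdiff_translate:
  assumes "\<And>y. y \<in> Y \<Longrightarrow> y + t \<in> Y'" and "s \<in> pdiff Z Y'"
  shows "s + t \<in> pdiff Z Y"
  using assms by (auto simp: mem_pdiff_iff add.assoc add.commute[of t])

lemma mimage_translate:
  assumes "\<And>y. y \<in> Y \<Longrightarrow> y + t \<in> Y'" and "y \<in> mimage K Y"
  shows "y + K *v t \<in> mimage K Y'"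
  using assms by (force simp: mem_mimage_iff matrix_vector_right_distrib)

lemma mem_Eset_Suc_iff:
  "y \<in> Eset Acl W (Suc j) \<longleftrightarrow> (\<exists>d\<in>Eset Acl W j. \<exists>w\<in>W. y = Acl *v d + w)"
  by (auto simp: msum_def mimage_def)

lemma mpow_Suc_mult_vec: "mpow A (Suc j) *v x = A *v (mpow A j *v x)"
  by (simp add: matrix_vector_mul_assoc)

lemma Eset_Suc_add_mpow:
  assumes "d \<in> Eset Acl W j" and "w \<in> W"
  shows "d + mpow Acl j *v w \<in> Eset Acl W (Suc j)"
  using assms(1)
proof (induction j arbitrary: d)
  case 0
  then show ?case using assms(2) unfolding mem_Eset_Suc_iff by auto
next
  case (Suc j)
  then obtain d' w' where d': "d' \<in> Eset Acl W j" "w' \<in> W" "d = Acl *v d' + w'"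
    by (auto simp: mem_Eset_Suc_iff simp del: Eset.simps)
  have "d + mpow Acl (Suc j) *v w = Acl *v (d' + mpow Acl j *v w) + w'"
    using d'(3) by (simp add: matrix_vector_mul_assoc matrix_vector_right_distrib algebra_simps)
  then show ?case
    using Suc.IH[OF d'(1)] d'(2) mem_Eset_Suc_iff[of _ Acl W "Suc j"] by blast
qed

lemma mpow_add_Eset_in_invariant:
  assumes inv: "msum (mimage Acl Z) W \<subseteq> Z" and "e \<in> Z" and "d \<in> Eset Acl W j"
  shows "mpow Acl j *v e + d \<in> Z"
  using assms(3)
proof (induction j arbitrary: d)
  case 0
  then show ?case using \<open>e \<in> Z\<close> by simp
next
  case (Suc j)
  then obtain d' w' where d': "d' \<in> Eset Acl W j" "w' \<in> W" "d = Acl *v d' + w'"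
    by (auto simp: mem_Eset_Suc_iff simp del: Eset.simps)
  have "mpow Acl (Suc j) *v e + d = Acl *v (mpow Acl j *v e + d') + w'"
    using d'(3) by (simp add: matrix_vector_mul_assoc matrix_vector_right_distrib algebra_simps)
  with Suc.IH[OF d'(1)] d'(2) inv show ?case
    by (auto simp: msum_def mimage_def)
qed

lemma pred_0 [simp]: "pred A B 0 x u = x"
  by (simp add: pred_def)

lemma pred_Suc: "pred A B (Suc j) x u = A *v pred A B j x u + B *v u"
proof -
  have "(\<Sum>m<Suc j. mpow A m *v (B *v u)) = B *v u + A *v (\<Sum>m<j. mpow A m *v (B *v u))"
    by (subst sum.lessThan_Suc_shift) (simp add: mpow_Suc_mult_vec vec.sum del: mpow.simps(2))
  then show ?thesis
    by (simp add: pred_def mpow_Suc_mult_vec matrix_vector_right_distrib algebra_simps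
        del: mpow.simps)
qed

lemma sum_matrix_vector_mult: "(\<Sum>i\<in>I. F i) *v u = (\<Sum>i\<in>I. F i *v u)"
  by (induction I rule: infinite_finite_induct) (auto simp: matrix_vector_mult_add_rdistrib)

lemma pred_eq_Ap_Bp: "pred A B M x u = Ap A M *v x + Bp A B M *v u"
  by (simp add: pred_def Ap_def Bp_def sum_matrix_vector_mult matrix_vector_mul_assoc)

lemma closed_loop_mult_vec: "(A + B ** K) *v y = A *v y + B *v (K *v y)"
  by (simp add: matrix_vector_mult_add_rdistrib matrix_vector_mul_assoc)

definition tube_feasible ::
  "real^'n^'n \<Rightarrow> real^'m^'n \<Rightarrow> real^'n^'p \<Rightarrow> real^'n^'m
   \<Rightarrow> (real^'n) set \<Rightarrow> (real^'m) set \<Rightarrow> (real^'n) set \<Rightarrow> (real^'n) set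
   \<Rightarrow> real^'n \<Rightarrow> (nat \<Rightarrow> real^'n) \<Rightarrow> nat \<Rightarrow> nat
   \<Rightarrow> (nat \<Rightarrow> real^'n) \<Rightarrow> (nat \<Rightarrow> real^'m) \<Rightarrow> bool" where
  "tube_feasible A B C K X U W Z x xr k L z v \<longleftrightarrow>
     z 0 = x \<and>
     (\<forall>j<L. z (Suc j) = A *v z j + B *v v j
         \<and> z j \<in> pdiff X (Eset (A + B ** K) W j)
         \<and> v j \<in> pdiff U (mimage K (Eset (A + B ** K) W j))
         \<and> C *v (z j - xr (k + j)) \<in> mimage C (pdiff Z (Eset (A + B ** K) W j))) \<and>
     z L - xr (k + L) \<in> pdiff Z (Eset (A + B ** K) W L)"

lemma lower_feasible_iff_tube_feasible:
  "lower_feasible A B C K M Xs Us Ws Zs x xr i k z v \<longleftrightarrow>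
   tube_feasible A B C K (Xs i) (Us i) (Ws i) (Zs i) x xr k (M - k mod M) z v"
  by (simp add: lower_feasible_def tube_feasible_def Let_def)

lemma tube_feasible_first_step:
  assumes "tube_feasible A B C K X U W Z x xr k L z v" and "0 < L"
  shows "x \<in> X" and "v 0 \<in> U"
  using assms by (auto simp: tube_feasible_def)

lemma tube_feasible_zero_horizon:
  assumes "tube_feasible A B C K X U W Z x xr k 0 z v"
  shows "x - xr k \<in> Z"
  using assms by (auto simp: tube_feasible_def)

lemma tube_feasible_from_plan:
  fixes A :: "real^'n^'n" and B :: "real^'m^'n" and C :: "real^'n^'p" and K :: "real^'n^'m"
  defines "Acl \<equiv> A + B ** K"
  assumes inv: "msum (mimage Acl Z) W \<subseteq> Z"
    and e: "x - xp \<in> Z"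
    and nominal_state: "\<And>l. l < L \<Longrightarrow> pred A B l xp up \<in> pdiff X Z"
    and nominal_input: "up \<in> pdiff U (mimage K Z)"
    and ref: "\<And>j. j \<le> L \<Longrightarrow> xr (k + j) = pred A B j xp up"
  shows "tube_feasible A B C K X U W Z x xr k L
           (\<lambda>j. pred A B j xp up + mpow Acl j *v (x - xp))
           (\<lambda>j. up + K *v (mpow Acl j *v (x - xp)))"
proof -
  define E where "E = Eset Acl W"
  have err: "mpow Acl j *v (x - xp) + d \<in> Z" if "d \<in> E j" for j d
    using mpow_add_Eset_in_invariant[OF inv e] that by (simp add: E_def)
  then have err_tightened: "mpow Acl j *v (x - xp) \<in> pdiff Z (E j)" for j
    by (simp add: mem_pdiff_iff)
  have step: "pred A B (Suc j) xp up + mpow Acl (Suc j) *v (x - xp)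
      = A *v (pred A B j xp up + mpow Acl j *v (x - xp)) + B *v (up + K *v (mpow Acl j *v (x - xp)))"
    for j
    by (simp add: pred_Suc mpow_Suc_mult_vec closed_loop_mult_vec[of A B K, folded Acl_def]
        matrix_vector_right_distrib algebra_simps del: mpow.simps)
  have "pred A B j xp up + mpow Acl j *v (x - xp) \<in> pdiff X (E j)" if "j < L" for j
    using nominal_state[OF that] err by (simp add: mem_pdiff_iff add.assoc)
  moreover have "up + K *v (mpow Acl j *v (x - xp)) \<in> pdiff U (mimage K (E j))" for j
    using nominal_input err by (force simp: mem_pdiff_iff mem_mimage_iff matrix_vector_right_distrib add.assoc)
  moreover have "C *v (pred A B j xp up + mpow Acl j *v (x - xp) - xr (k + j))
                   \<in> mimage C (pdiff Z (E j))" if "j < L" for j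
    using ref[of j] that err_tightened[of j] by (auto simp: mem_mimage_iff)
  moreover have "pred A B L xp up + mpow Acl L *v (x - xp) - xr (k + L) \<in> pdiff Z (E L)"
    using ref[of L] err_tightened[of L] by simp
  ultimately show ?thesis
    unfolding tube_feasible_def Acl_def[symmetric] E_def[symmetric] using step by simp
qed

lemma tube_feasible_shift:
  fixes A :: "real^'n^'n" and B :: "real^'m^'n" and C :: "real^'n^'p" and K :: "real^'n^'m"
  defines "Acl \<equiv> A + B ** K"
  assumes feas: "tube_feasible A B C K X U W Z x xr k (Suc L) z v" and w: "w \<in> W"
  shows "tube_feasible A B C K X U W Z (A *v x + B *v v 0 + w) xr (Suc k) L
           (\<lambda>j. z (Suc j) + mpow Acl j *v w) (\<lambda>j. v (Suc j) + K *v (mpow Acl j *v w))"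
proof -
  define E where "E = Eset Acl W"
  have grow: "y + mpow Acl j *v w \<in> E (Suc j)" if "y \<in> E j" for y j
    using Eset_Suc_add_mpow[OF that[unfolded E_def] w] by (simp add: E_def)
  have step: "z (Suc j) = A *v z j + B *v v j"
    and state: "z j \<in> pdiff X (E j)"
    and input: "v j \<in> pdiff U (mimage K (E j))"
    and tracking: "C *v (z j - xr (k + j)) \<in> mimage C (pdiff Z (E j))" if "j < Suc L" for j
    using feas that unfolding tube_feasible_def E_def Acl_def by blast+
  have T: "z (Suc L) - xr (k + Suc L) \<in> pdiff Z (E (Suc L))"
    using feas unfolding tube_feasible_def E_def Acl_def by blast
  have tracking': "C *v (z (Suc j) + mpow Acl j *v w - xr (Suc k + j)) \<in> mimage C (pdiff Z (E j))"
    if jL: "j < L" for j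
  proof -
    obtain s where s: "s \<in> pdiff Z (E (Suc j))" "C *v (z (Suc j) - xr (k + Suc j)) = C *v s"
      using tracking[of "Suc j"] jL by (auto simp: mem_mimage_iff)
    have "C *v (z (Suc j) + mpow Acl j *v w - xr (Suc k + j)) = C *v (s + mpow Acl j *v w)"
      using s(2) by (simp add: matrix_vector_right_distrib vec.diff algebra_simps)
    with pdiff_translate[OF grow s(1)] show ?thesis
      by (auto simp: mem_mimage_iff)
  qed
  have start: "A *v x + B *v v 0 + w = z (Suc 0) + mpow Acl 0 *v w"
    using step[of 0] feas by (simp add: tube_feasible_def)
  have step': "z (Suc (Suc j)) + mpow Acl (Suc j) *v w
      = A *v (z (Suc j) + mpow Acl j *v w) + B *v (v (Suc j) + K *v (mpow Acl j *v w))"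
    if "j < L" for j
    using step[of "Suc j"] that
    by (simp add: mpow_Suc_mult_vec closed_loop_mult_vec[of A B K, folded Acl_def]
        matrix_vector_right_distrib algebra_simps del: mpow.simps)
  have "z (Suc j) + mpow Acl j *v w \<in> pdiff X (E j)" if "j < L" for j
    using pdiff_translate[OF grow state[of "Suc j"]] that by simp
  moreover have "v (Suc j) + K *v (mpow Acl j *v w) \<in> pdiff U (mimage K (E j))" if "j < L" for j
    using pdiff_translate[OF mimage_translate[OF grow] input[of "Suc j"]] that by simp
  moreover have "z (Suc L) + mpow Acl L *v w - xr (Suc k + L) \<in> pdiff Z (E L)"
    using pdiff_translate[OF grow T] by (simp add: algebra_simps)
  ultimately show ?thesis
    unfolding tube_feasible_def Acl_def[symmetric] E_def[symmetric]
    using start step' tracking' by simp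
qed

lemma plan_feasible_shift:
  assumes feas: "plan_feasible A B C Obs M N Nw Xs Us Zs Is Xf K \<xi> i xp up"
    and N_pos: "0 < N"
    and terminal: "\<And>xf. xf \<in> Xf i \<Longrightarrow>
               Ap A M *v xf + Bp A B M *v kf xf \<in> Xf i
             \<and> xf \<in> pdiff (Xs i) (Zs i)
             \<and> kf xf \<in> pdiff (Us i) (mimage K (Zs i))
             \<and> (xf, kf xf) \<in> Is i
             \<and> avoids Obs C (Zs i) xf"
    and err: "\<xi>' - (Ap A M *v xp 0 + Bp A B M *v up 0) \<in> Zs i"
  shows "plan_feasible A B C Obs M N Nw Xs Us Zs Is Xf K \<xi>' i
           (\<lambda>j. if j < N then xp (Suc j) else Ap A M *v xp N + Bp A B M *v kf (xp N))
           (\<lambda>j. if j < N - 1 then up (Suc j) else kf (xp N))"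
proof -
  have stage: "xp (Suc j) = Ap A M *v xp j + Bp A B M *v up j
          \<and> xp j \<in> pdiff (Xs i) (Zs i)
          \<and> up j \<in> pdiff (Us i) (mimage K (Zs i))
          \<and> avoids Obs C (Zs i) (xp j)
          \<and> (xp j, up j) \<in> Is i" if "j < N" for j
    using feas that unfolding plan_feasible_def by blast
  have xf: "xp N \<in> Xf i" and i: "i \<in> {1..Nw}"
    using feas unfolding plan_feasible_def by blast+
  define xp' where "xp' j = (if j < N then xp (Suc j) else Ap A M *v xp N + Bp A B M *v kf (xp N))"
    for j
  define up' where "up' j = (if j < N - 1 then up (Suc j) else kf (xp N))" for j
  have stage': "xp' (Suc j) = Ap A M *v xp' j + Bp A B M *v up' j
          \<and> xp' j \<in> pdiff (Xs i) (Zs i)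
          \<and> up' j \<in> pdiff (Us i) (mimage K (Zs i))
          \<and> avoids Obs C (Zs i) (xp' j)
          \<and> (xp' j, up' j) \<in> Is i" if "j < N" for j
  proof (cases "Suc j < N")
    case True
    then have "j < N - 1"
      by simp
    then show ?thesis
      using stage[of "Suc j"] True by (simp add: xp'_def up'_def)
  next
    case False
    with that have "Suc j = N" by simp
    then show ?thesis
      using terminal[OF xf] by (auto simp: xp'_def up'_def)
  qed
  have "\<xi>' - xp' 0 \<in> Zs i"
    using err stage[OF N_pos] N_pos by (simp add: xp'_def)
  moreover have "xp' N \<in> Xf i"
    using terminal[OF xf] by (simp add: xp'_def)
  ultimately have "plan_feasible A B C Obs M N Nw Xs Us Zs Is Xf K \<xi>' i xp' up'"
    using i stage' unfolding plan_feasible_def by blast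
  then show ?thesis
    unfolding xp'_def up'_def .
qed

text \<open>Only feasibility of the selected plans and lower-layer solutions enters the argument, not
  their optimality.\<close>
locale hierarchical_closed_loop =
  fixes A :: "real^'n^'n" and B :: "real^'m^'n" and C :: "real^'n^'p" and K :: "real^'n^'m"
    and Obs :: "(real^'p) set" and M :: nat and N :: nat and Nw :: nat
    and Xs :: "nat \<Rightarrow> (real^'n) set" and Us :: "nat \<Rightarrow> (real^'m) set"
    and Ws :: "nat \<Rightarrow> (real^'n) set" and Zs :: "nat \<Rightarrow> (real^'n) set"
    and Is :: "nat \<Rightarrow> ((real^'n) \<times> (real^'m)) set"
    and Xf :: "nat \<Rightarrow> (real^'n) set" and kf :: "nat \<Rightarrow> real^'n \<Rightarrow> real^'m"
    and x :: "nat \<Rightarrow> real^'n" and u :: "nat \<Rightarrow> real^'m" and w :: "nat \<Rightarrow> real^'n"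
    and ist :: "nat \<Rightarrow> nat" and xps :: "nat \<Rightarrow> nat \<Rightarrow> real^'n" and ups :: "nat \<Rightarrow> nat \<Rightarrow> real^'m"
    and xr :: "nat \<Rightarrow> nat \<Rightarrow> real^'n"
    and zs :: "nat \<Rightarrow> nat \<Rightarrow> real^'n" and vs :: "nat \<Rightarrow> nat \<Rightarrow> real^'m"
  assumes M_pos: "0 < M" and N_pos: "0 < N"
    and Z_invariant: "\<And>i. i \<in> {1..Nw} \<Longrightarrow> msum (mimage (A + B ** K) (Zs i)) (Ws i) \<subseteq> Zs i"
    and disturbance_bound:
      "\<And>i k. i \<in> {1..Nw} \<Longrightarrow> x k \<in> Xs i \<Longrightarrow> u k \<in> Us i \<Longrightarrow> w k \<in> Ws i"
    and inter_sample: "\<And>i xp up l. i \<in> {1..Nw} \<Longrightarrow> (xp, up) \<in> Is i \<Longrightarrow> l \<in> {1..M-1} \<Longrightarrow>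
               pred A B l xp up \<in> pdiff (Xs i) (Zs i)"
    and terminal: "\<And>i xf. i \<in> {1..Nw} \<Longrightarrow> xf \<in> Xf i \<Longrightarrow>
               Ap A M *v xf + Bp A B M *v kf i xf \<in> Xf i
             \<and> xf \<in> pdiff (Xs i) (Zs i)
             \<and> kf i xf \<in> pdiff (Us i) (mimage K (Zs i))
             \<and> (xf, kf i xf) \<in> Is i
             \<and> avoids Obs C (Zs i) xf"
    and plant: "\<And>k. x (Suc k) = A *v x k + B *v u k + w k"
    and planning: "\<And>kp. (\<exists>i xp up. plan_feasible A B C Obs M N Nw Xs Us Zs Is Xf K (x (kp * M)) i xp up)
               \<Longrightarrow> plan_feasible A B C Obs M N Nw Xs Us Zs Is Xf K (x (kp * M))
                     (ist kp) (xps kp) (ups kp)"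
    and reference: "\<And>kp j. j \<le> M \<Longrightarrow> xr kp (kp * M + j) = pred A B j (xps kp 0) (ups kp 0)"
    and lower_layer:
      "\<And>k. (\<exists>z v. lower_feasible A B C K M Xs Us Ws Zs (x k) (xr (k div M)) (ist (k div M)) k z v)
         \<Longrightarrow> lower_feasible A B C K M Xs Us Ws Zs (x k) (xr (k div M)) (ist (k div M)) k
               (zs k) (vs k)
           \<and> u k = vs k 0"
begin

abbreviation planning_feasible :: "nat \<Rightarrow> bool" where
  "planning_feasible kp \<equiv>
     \<exists>i xp up. plan_feasible A B C Obs M N Nw Xs Us Zs Is Xf K (x (kp * M)) i xp up"

abbreviation lower_layer_feasible :: "nat \<Rightarrow> bool" where
  "lower_layer_feasible k \<equiv>
     \<exists>z v. lower_feasible A B C K M Xs Us Ws Zs (x k) (xr (k div M)) (ist (k div M)) k z v"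

lemma lower_layer_feasible_at_planning_instant:
  assumes "planning_feasible kp"
  shows "lower_layer_feasible (kp * M)"
proof -
  let ?i = "ist kp" and ?xp = "xps kp 0" and ?up = "ups kp 0"
  have i: "?i \<in> {1..Nw}" and e: "x (kp * M) - ?xp \<in> Zs ?i"
    and X0: "?xp \<in> pdiff (Xs ?i) (Zs ?i)" and U0: "?up \<in> pdiff (Us ?i) (mimage K (Zs ?i))"
    and I0: "(?xp, ?up) \<in> Is ?i"
    using planning[OF assms] N_pos unfolding plan_feasible_def by auto
  have "pred A B l ?xp ?up \<in> pdiff (Xs ?i) (Zs ?i)" if "l < M" for l
    using X0 inter_sample[OF i I0, of l] that by (cases l) auto
  from tube_feasible_from_plan[OF Z_invariant[OF i] e this U0 reference]
  show ?thesis
    using M_pos by (auto simp: lower_feasible_iff_tube_feasible)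
qed

lemma tube_feasible_after_step:
  assumes "planning_feasible (k div M)" and "lower_layer_feasible k"
  defines "i \<equiv> ist (k div M)"
  shows "\<exists>z v. tube_feasible A B C K (Xs i) (Us i) (Ws i) (Zs i)
                 (x (Suc k)) (xr (k div M)) (Suc k) (M - Suc (k mod M)) z v"
proof -
  have i: "i \<in> {1..Nw}"
    using planning[OF assms(1)] unfolding plan_feasible_def i_def by blast
  have horizon: "M - k mod M = Suc (M - Suc (k mod M))"
    using M_pos by (simp add: Suc_diff_Suc)
  have tube: "tube_feasible A B C K (Xs i) (Us i) (Ws i) (Zs i) (x k) (xr (k div M)) k
                (Suc (M - Suc (k mod M))) (zs k) (vs k)" and u: "u k = vs k 0"
    using lower_layer[OF assms(2)] by (simp_all add: lower_feasible_iff_tube_feasible i_def horizon)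
  have "w k \<in> Ws i"
    using disturbance_bound[OF i] tube_feasible_first_step[OF tube] u by simp
  from tube_feasible_shift[OF tube this]
  show ?thesis
    unfolding plant u by blast
qed

lemma closed_loop_step:
  assumes "planning_feasible (k div M)" and "lower_layer_feasible k"
  shows "planning_feasible (Suc k div M) \<and> lower_layer_feasible (Suc k)"
proof -
  let ?kp = "k div M" and ?i = "ist (k div M)"
  obtain z v where tube: "tube_feasible A B C K (Xs ?i) (Us ?i) (Ws ?i) (Zs ?i)
                 (x (Suc k)) (xr ?kp) (Suc k) (M - Suc (k mod M)) z v"
    using tube_feasible_after_step[OF assms] by blast
  show ?thesis
  proof (cases "Suc (k mod M) = M")
    case False
    then have "Suc k div M = ?kp" and "Suc k mod M = Suc (k mod M)"
      by (simp_all add: div_Suc mod_Suc)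
    with tube have "lower_layer_feasible (Suc k)"
      unfolding lower_feasible_iff_tube_feasible by metis
    with assms(1) \<open>Suc k div M = ?kp\<close> show ?thesis
      by simp
  next
    case True
    have next_instant: "Suc k = Suc ?kp * M"
      unfolding mult_Suc using True div_mult_mod_eq[of k M] by linarith
    have "Suc k div M = Suc ?kp"
      using True by (simp add: div_Suc mod_Suc)
    have pf: "plan_feasible A B C Obs M N Nw Xs Us Zs Is Xf K (x (?kp * M))
                ?i (xps ?kp) (ups ?kp)"
      using planning[OF assms(1)] .
    then have i: "?i \<in> {1..Nw}"
      unfolding plan_feasible_def by blast
    have "xr ?kp (Suc k) = Ap A M *v xps ?kp 0 + Bp A B M *v ups ?kp 0"
      using reference[of M ?kp] next_instant by (simp add: pred_eq_Ap_Bp add.commute)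
    moreover have "x (Suc k) - xr ?kp (Suc k) \<in> Zs ?i"
      using tube_feasible_zero_horizon[OF tube[unfolded True diff_self_eq_0]] .
    ultimately have "x (Suc ?kp * M) - (Ap A M *v xps ?kp 0 + Bp A B M *v ups ?kp 0) \<in> Zs ?i"
      using next_instant by simp
    then have "planning_feasible (Suc ?kp)"
      using plan_feasible_shift[OF pf N_pos terminal[OF i]] by blast
    with lower_layer_feasible_at_planning_instant have "lower_layer_feasible (Suc ?kp * M)" .
    with \<open>planning_feasible (Suc ?kp)\<close> \<open>Suc k div M = Suc ?kp\<close> show ?thesis
      by (simp only: next_instant)
  qed
qed

lemma recursive_feasibility:
  assumes "planning_feasible 0"
  shows "(\<forall>kp. planning_feasible kp) \<and> (\<forall>k. lower_layer_feasible k)"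
proof -
  have invariant: "planning_feasible (k div M) \<and> lower_layer_feasible k" for k
  proof (induction k)
    case 0
    show ?case
      using assms lower_layer_feasible_at_planning_instant[of 0] by simp
  next
    case (Suc k)
    then show ?case
      using closed_loop_step by blast
  qed
  show ?thesis
  proof (intro conjI allI)
    fix kp
    show "planning_feasible kp"
      using invariant[of "kp * M"] M_pos by simp
  next
    fix k
    show "lower_layer_feasible k"
      using invariant by blast
  qed
qed

end

theorem proposition3:
  fixes A :: "real^'n^'n" and B :: "real^'m^'n" and C :: "real^'n^'p" and K :: "real^'n^'m"
    and X :: "(real^'n) set" and U :: "(real^'m) set"
    and H :: nat and q :: "nat \<Rightarrow> nat" and Eo :: "nat \<Rightarrow> nat \<Rightarrow> real^'p" and fo :: "nat \<Rightarrow> nat \<Rightarrow> real"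
    and Nw :: nat and Xs Ws Zs Xf :: "nat \<Rightarrow> (real^'n) set" and Us :: "nat \<Rightarrow> (real^'m) set"
    and Is :: "nat \<Rightarrow> ((real^'n) \<times> (real^'m)) set" and kf :: "nat \<Rightarrow> real^'n \<Rightarrow> real^'m"
    and M N :: nat and ax au :: real and xg :: "real^'n"
    and Q P :: "real^'n^'n" and R :: "real^'m^'m"
    and x w :: "nat \<Rightarrow> real^'n" and u :: "nat \<Rightarrow> real^'m"
    and ist :: "nat \<Rightarrow> nat" and xps :: "nat \<Rightarrow> nat \<Rightarrow> real^'n" and ups :: "nat \<Rightarrow> nat \<Rightarrow> real^'m"
    and xr :: "nat \<Rightarrow> nat \<Rightarrow> real^'n"
    and zs :: "nat \<Rightarrow> nat \<Rightarrow> real^'n" and vs :: "nat \<Rightarrow> nat \<Rightarrow> real^'m"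
  defines "Obs \<equiv> obstacles H q Eo fo"
  assumes XU: "closed X" "convex X" "closed U" "convex U"
    and obst_poly: "\<forall>l\<in>{1..H}. \<exists>S. polytope S \<and> obst q Eo fo l = interior S"
    and modes: "\<forall>i\<in>{1..Nw}. Xs i \<subseteq> X \<and> polyhedron (Xs i) \<and> Us i \<subseteq> U \<and> polyhedron (Us i)
                   \<and> polytope (Ws i) \<and> polytope (Zs i)
                   \<and> msum (mimage (A + B ** K) (Zs i)) (Ws i) \<subseteq> Zs i"
    and stab: "schur_stable (A + B ** K)"
    and M_gt: "M > 1" and N_pos: "N > 0" and weights: "ax \<ge> 0" "au \<ge> 0"
    and QRP: "pos_def Q" "pos_def R" "pos_def P"
    \<comment> \<open>(A1)\<close>
    and A1: "\<forall>i\<in>{1..Nw}. \<forall>k. x k \<in> Xs i \<and> u k \<in> Us i \<longrightarrow> w k \<in> Ws i"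
    \<comment> \<open>(A2)\<close>
    and A2: "controllable A B" "controllable (Ap A M) (Bp A B M)"
    \<comment> \<open>(A3)\<close>
    and A3: "\<forall>i\<in>{1..Nw}. \<forall>xp up. (xp, up) \<in> Is i \<longrightarrow>
               (\<forall>l\<in>{1..M-1}. pred A B l xp up \<in> pdiff (Xs i) (Zs i)
                              \<and> avoids Obs C (Zs i) (pred A B l xp up))"
    \<comment> \<open>(A4)\<close>
    and A4: "\<forall>i\<in>{1..Nw}. \<forall>xp\<in>Xf i.
               Ap A M *v xp + Bp A B M *v kf i xp \<in> Xf i
             \<and> xp \<in> pdiff (Xs i) (Zs i)
             \<and> kf i xp \<in> pdiff (Us i) (mimage K (Zs i))
             \<and> (xp, kf i xp) \<in> Is i
             \<and> avoids Obs C (Zs i) xp"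
    \<comment> \<open>closed loop: plant\<close>
    and plant: "\<forall>k. x (Suc k) = A *v x k + B *v u k + w k"
    \<comment> \<open>closed loop: planning layer (optimal solution whenever the problem is feasible)\<close>
    and planning: "\<forall>kp. (\<exists>i xp up. plan_feasible A B C Obs M N Nw Xs Us Zs Is Xf K (x (kp * M)) i xp up)
                     \<longrightarrow> plan_optimal A B C Obs M N Nw Xs Us Zs Is Xf K ax au xg (x (kp * M))
                            (ist kp) (xps kp) (ups kp)"
    \<comment> \<open>closed loop: reference generation\<close>
    and reference: "\<forall>kp j. j \<le> M \<longrightarrow> xr kp (kp * M + j) = pred A B j (xps kp 0) (ups kp 0)"
    \<comment> \<open>closed loop: lower layer (optimal solution whenever feasible, first input applied)\<close>
    and lower: "\<forall>k. (\<exists>z v. lower_feasible A B C K M Xs Us Ws Zs (x k) (xr (k div M)) (ist (k div M)) k z v)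
                  \<longrightarrow> lower_optimal A B C K M Xs Us Ws Zs Q R P (x k) (xr (k div M)) (ist (k div M)) k
                         (zs k) (vs k)
                      \<and> u k = vs k 0"
    \<comment> \<open>initial feasibility\<close>
    and init: "\<exists>i xp up. plan_feasible A B C Obs M N Nw Xs Us Zs Is Xf K (x 0) i xp up"
  shows "(\<forall>kp. \<exists>i xp up. plan_feasible A B C Obs M N Nw Xs Us Zs Is Xf K (x (kp * M)) i xp up)
       \<and> (\<forall>k. \<exists>z v. lower_feasible A B C K M Xs Us Ws Zs (x k) (xr (k div M)) (ist (k div M)) k z v)"
proof -
  interpret hierarchical_closed_loop A B C K Obs M N Nw Xs Us Ws Zs Is Xf kf x u w
      ist xps ups xr zs vs
    by unfold_locales
      (use M_gt in simp, use N_pos in simp, use modes in blast, use A1 in blast,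
        use A3 in blast, use A4 in blast, use plant in blast,
        use planning in \<open>unfold plan_optimal_def, blast\<close>, use reference in blast,
        use lower in \<open>unfold lower_optimal_def, blast\<close>)
  show ?thesis
    using recursive_feasibility init by simp
qed

end
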